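(* Let $q$ be a prime power and let $\{P_i\}$ be an infinite family of toric codes over $\mathbb{F}_q$, with $P_i\subseteq[0,q-2]^{n_i}$. If the sequence $\{M(P_i)\}$ is unbounded, then $\delta(P_i)\to0$ as $i\to\infty$.
   Context: For an integral convex polytope $P\subseteq[0,q-2]^n$: $\mathcal{L}_P=\mathrm{span}_{\mathbb{F}_q}\{x^p: p\in P\cap\mathbb{Z}^n\}$, $N(P)=\max_{0\neq f\in\mathcal{L}_P}|Z(f)|$ with $Z(f)$ the zero set of $f$ in $(\mathbb{F}_q^\times)^n$, $\delta(P)=\big((q-1)^n-N(P)\big)/(q-1)^n$, and $R(P)=|P\cap\mathbb{Z}^n|/(q-1)^n$. A sequence of nonempty integral convex polytopes $P_i\subseteq[0,q-2]^{n_i}$ is an infinite family of toric codes if $n_i\to\infty$ and $\delta(P_i)\to\delta$, $R(P_i)\to R$ for some $\delta,R\in[0,1]$. $M(P)$ denotes the largest integer $i\ge0$ such that there is a unimodular affine transformation $A$ (a map $x\mapsto Mx+\lambda$ with $M\in GL(n,\mathbb{Z})$, $\lambda\in\mathbb{Z}^n$) with $A([0,1]^i\times\{0\}^{n-i})\subseteq P$. *)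

theory Defs
  imports "HOL-Analysis.Analysis"
begin

text \<open>Points of R^n are represented as functions nat => real that vanish at
coordinates j >= n; lattice points of Z^n as functions nat => int vanishing
at j >= n.  The field F_q is a finite field type 'a, q = CARD('a).\<close>

definition conv_hull_fin :: "(nat \<Rightarrow> real) set \<Rightarrow> (nat \<Rightarrow> real) set" where
  "conv_hull_fin V = {x. \<exists>u. (\<forall>v\<in>V. 0 \<le> u v) \<and> (\<Sum>v\<in>V. u v) = 1 \<and>
                          (\<forall>j. x j = (\<Sum>v\<in>V. u v * v j))}"

definition integral_polytope :: "nat \<Rightarrow> (nat \<Rightarrow> real) set \<Rightarrow> bool" where
  "integral_polytope n P \<longleftrightarrow> (\<exists>V. finite V \<and> V \<noteq> {} \<and>
     (\<forall>v\<in>V. (\<forall>j. v j \<in> \<int>) \<and> (\<forall>j\<ge>n. v j = 0)) \<and> P = conv_hull_fin V)"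

definition in_box :: "nat \<Rightarrow> nat \<Rightarrow> (nat \<Rightarrow> real) set \<Rightarrow> bool" where
  "in_box q n P \<longleftrightarrow> (\<forall>x\<in>P. (\<forall>j<n. 0 \<le> x j \<and> x j \<le> real q - 2) \<and> (\<forall>j\<ge>n. x j = 0))"

definition lattice_pts :: "(nat \<Rightarrow> real) set \<Rightarrow> (nat \<Rightarrow> int) set" where
  "lattice_pts P = {p. (\<lambda>j. real_of_int (p j)) \<in> P}"

definition eval_toric :: "nat \<Rightarrow> (nat \<Rightarrow> real) set \<Rightarrow> ((nat \<Rightarrow> int) \<Rightarrow> 'a::field) \<Rightarrow> (nat \<Rightarrow> 'a) \<Rightarrow> 'a" where
  "eval_toric n P c x = (\<Sum>p\<in>lattice_pts P. c p * (\<Prod>j<n. x j ^ nat (p j)))"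

definition zero_set :: "nat \<Rightarrow> (nat \<Rightarrow> real) set \<Rightarrow> ((nat \<Rightarrow> int) \<Rightarrow> 'a::{finite,field}) \<Rightarrow> (nat \<Rightarrow> 'a) set" where
  "zero_set n P c = {x. (\<forall>j<n. x j \<noteq> 0) \<and> (\<forall>j\<ge>n. x j = 0) \<and> eval_toric n P c x = 0}"

definition N_toric :: "'a::{finite,field} itself \<Rightarrow> nat \<Rightarrow> (nat \<Rightarrow> real) set \<Rightarrow> nat" where
  "N_toric T n P = Max {card (zero_set n P c) | c :: (nat \<Rightarrow> int) \<Rightarrow> 'a.
      (\<forall>p. p \<notin> lattice_pts P \<longrightarrow> c p = 0) \<and> (\<exists>p\<in>lattice_pts P. c p \<noteq> 0)}"

definition delta_toric :: "'a::{finite,field} itself \<Rightarrow> nat \<Rightarrow> (nat \<Rightarrow> real) set \<Rightarrow> real" where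
  "delta_toric T n P = (real ((CARD('a) - 1) ^ n) - real (N_toric T n P)) / real ((CARD('a) - 1) ^ n)"

definition rate_toric :: "'a::{finite,field} itself \<Rightarrow> nat \<Rightarrow> (nat \<Rightarrow> real) set \<Rightarrow> real" where
  "rate_toric T n P = real (card (lattice_pts P)) / real ((CARD('a) - 1) ^ n)"

definition unimodular :: "nat \<Rightarrow> (nat \<Rightarrow> nat \<Rightarrow> int) \<Rightarrow> bool" where
  "unimodular n A \<longleftrightarrow> (\<exists>B. \<forall>j<n. \<forall>l<n.
      (\<Sum>m<n. A j m * B m l) = (if j = l then 1 else 0) \<and>
      (\<Sum>m<n. B j m * A m l) = (if j = l then 1 else 0))"

definition cube_embeds :: "nat \<Rightarrow> (nat \<Rightarrow> real) set \<Rightarrow> nat \<Rightarrow> bool" where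
  "cube_embeds n P k \<longleftrightarrow> (\<exists>A lam. unimodular n A \<and> (\<forall>j\<ge>n. lam j = (0::int)) \<and>
     (\<forall>y::nat \<Rightarrow> real. (\<forall>j<k. 0 \<le> y j \<and> y j \<le> 1) \<and> (\<forall>j\<ge>k. y j = 0) \<longrightarrow>
        (\<lambda>j. if j < n then (\<Sum>l<n. real_of_int (A j l) * y l) + real_of_int (lam j) else 0) \<in> P))"

definition M_toric :: "nat \<Rightarrow> (nat \<Rightarrow> real) set \<Rightarrow> nat" where
  "M_toric n P = Max {k. k \<le> n \<and> cube_embeds n P k}"

end

theory Submission
  imports Defs
begin

text \<open>If a unimodular image A[0,1]^k + lam of the k-cube lies in P, the Laurent polynomial
  f = x^lam * prod_{m<k} (x^(a_m) - 1), a_m the columns of A, has all its monomials at the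
  images of the cube's vertices, so f lies in L_P. The monomial change of variables
  y_m = x^(a_m) is injective on the torus because A is invertible over Z, and f does not
  vanish only where y_m \<noteq> 1 for all m < k; hence f has at most (q-2)^k (q-1)^(n-k) non-zeros
  and delta(P) \<le> ((q-2)/(q-1))^k. Along the family, delta(P_i) \<le> ((q-2)/(q-1))^M(P_i) with
  M(P_i) unbounded, so the limit of delta(P_i) is 0.\<close>

definition coord_box :: "nat \<Rightarrow> (nat \<Rightarrow> 'b set) \<Rightarrow> (nat \<Rightarrow> 'b::zero) set" where
  "coord_box n S = {x. (\<forall>j<n. x j \<in> S j) \<and> (\<forall>j\<ge>n. x j = 0)}"

definition torus :: "nat \<Rightarrow> (nat \<Rightarrow> 'a::field) set" where
  "torus n = coord_box n (\<lambda>_. - {0})"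

lemma bij_betw_coord_box_PiE:
  "bij_betw (\<lambda>x. restrict x {..<n}) (coord_box n S) (PiE {..<n} S)"
proof (rule bij_betwI[where g = "\<lambda>f j. if j < n then f j else 0"])
  show "(\<lambda>f j. if j < n then f j else 0) \<in> PiE {..<n} S \<rightarrow> coord_box n S"
    by (auto simp: coord_box_def PiE_def Pi_def)
  show "\<And>y. y \<in> PiE {..<n} S \<Longrightarrow> restrict (\<lambda>j. if j < n then y j else 0) {..<n} = y"
    by (auto simp: fun_eq_iff PiE_def extensional_def)
qed (auto simp: coord_box_def fun_eq_iff)

lemma finite_coord_box: "(\<And>j. j < n \<Longrightarrow> finite (S j)) \<Longrightarrow> finite (coord_box n S)"
  using finite_PiE[of "{..<n}" S] bij_betw_finite[OF bij_betw_coord_box_PiE[of n S]] by simp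

lemma card_coord_box: "card (coord_box n S) = (\<Prod>j<n. card (S j))"
  using bij_betw_same_card[OF bij_betw_coord_box_PiE[of n S]] card_PiE[of "{..<n}" S] by simp

lemma card_UNIV_ge_2: "2 \<le> CARD('a::{finite,field})"
proof -
  have "card {0::'a, 1} \<le> CARD('a)" by (rule card_mono) auto
  then show ?thesis by simp
qed

lemma card_Compl_0: "card (- {0::'a::{finite,field}}) = CARD('a) - 1"
  by (simp add: Compl_eq_Diff_UNIV card_Diff_subset)

lemma card_Compl_0_1: "card (- {0::'a::{finite,field}, 1}) = CARD('a) - 2"
  by (simp add: Compl_eq_Diff_UNIV card_Diff_subset)

lemma finite_torus: "finite (torus n :: (nat \<Rightarrow> 'a::{finite,field}) set)"
  unfolding torus_def by (rule finite_coord_box) simp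

lemma card_torus: "card (torus n :: (nat \<Rightarrow> 'a::{finite,field}) set) = (CARD('a) - 1) ^ n"
  by (simp add: torus_def card_coord_box card_Compl_0)

lemma torus_nonzero: "x \<in> torus n \<Longrightarrow> j < n \<Longrightarrow> x j \<noteq> 0"
  by (simp add: torus_def coord_box_def)

lemma zero_set_eq: "zero_set n P c = {x \<in> torus n. eval_toric n P c x = 0}"
  by (auto simp: zero_set_def torus_def coord_box_def)

text \<open>Exponents may be negative; only meaningful on the torus.\<close>
definition laurent_monomial :: "nat \<Rightarrow> (nat \<Rightarrow> int) \<Rightarrow> (nat \<Rightarrow> 'a::field) \<Rightarrow> 'a" where
  "laurent_monomial n a x = (\<Prod>j<n. x j powi a j)"

lemma power_int_sum:
  fixes x :: "'a::field"
  assumes "x \<noteq> 0"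
  shows "x powi (\<Sum>i\<in>I. e i) = (\<Prod>i\<in>I. x powi e i)"
proof (induction I rule: infinite_finite_induct)
  case (insert a F) then show ?case using assms by (simp add: power_int_add)
qed auto

lemma prod_power_int: "(\<Prod>i\<in>I. f i :: 'a::field) powi e = (\<Prod>i\<in>I. f i powi e)"
proof (induction I rule: infinite_finite_induct)
  case (insert a F) then show ?case by (simp add: power_int_mult_distrib)
qed auto

lemma laurent_monomial_add:
  "x \<in> torus n \<Longrightarrow>
    laurent_monomial n (\<lambda>j. a j + b j) x = laurent_monomial n a x * laurent_monomial n b x"
  by (simp add: laurent_monomial_def torus_nonzero power_int_add prod.distrib)

lemma laurent_monomial_sum:
  "x \<in> torus n \<Longrightarrow>
    laurent_monomial n (\<lambda>j. \<Sum>m\<in>I. a m j) x = (\<Prod>m\<in>I. laurent_monomial n (a m) x)"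
  by (simp add: laurent_monomial_def torus_nonzero power_int_sum prod.swap[of _ I])

lemma laurent_monomial_nonzero: "x \<in> torus n \<Longrightarrow> laurent_monomial n a x \<noteq> 0"
  by (simp add: laurent_monomial_def torus_nonzero)

lemma laurent_monomial_nat:
  "(\<And>j. j < n \<Longrightarrow> 0 \<le> p j) \<Longrightarrow> laurent_monomial n p x = (\<Prod>j<n. x j ^ nat (p j))"
  by (simp add: laurent_monomial_def power_int_def)

definition monomial_map :: "nat \<Rightarrow> (nat \<Rightarrow> nat \<Rightarrow> int) \<Rightarrow> (nat \<Rightarrow> 'a::field) \<Rightarrow> nat \<Rightarrow> 'a" where
  "monomial_map n A x = (\<lambda>m. if m < n then laurent_monomial n (\<lambda>j. A j m) x else 0)"

lemma monomial_map_in_torus: "x \<in> torus n \<Longrightarrow> monomial_map n A x \<in> torus n"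
  by (simp add: torus_def coord_box_def monomial_map_def laurent_monomial_nonzero[unfolded torus_def])

lemma monomial_map_inverse:
  assumes x: "x \<in> torus n" and l: "l < n"
    and AB: "\<And>j. j < n \<Longrightarrow> (\<Sum>m<n. A j m * B m l) = (if j = l then 1 else 0)"
  shows "(\<Prod>m<n. monomial_map n A x m powi B m l) = x l"
proof -
  have "(\<Prod>m<n. monomial_map n A x m powi B m l) = (\<Prod>m<n. \<Prod>j<n. x j powi (A j m * B m l))"
    by (simp add: monomial_map_def laurent_monomial_def prod_power_int power_int_mult)
  also have "\<dots> = (\<Prod>j<n. x j powi (\<Sum>m<n. A j m * B m l))"
    by (subst prod.swap) (simp add: power_int_sum torus_nonzero[OF x])
  also have "\<dots> = (\<Prod>j<n. if j = l then x j else 1)"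
    by (intro prod.cong) (auto simp: AB)
  finally show ?thesis using l by simp
qed

lemma inj_on_monomial_map:
  assumes "unimodular n A"
  shows "inj_on (monomial_map n A) (torus n :: (nat \<Rightarrow> 'a::field) set)"
proof (rule inj_onI)
  obtain B where AB: "\<And>j l. j < n \<Longrightarrow> l < n \<Longrightarrow> (\<Sum>m<n. A j m * B m l) = (if j = l then 1 else 0)"
    using assms unfolding unimodular_def by blast
  fix x y :: "nat \<Rightarrow> 'a" assume x: "x \<in> torus n" and y: "y \<in> torus n"
    and eq: "monomial_map n A x = monomial_map n A y"
  have "x l = y l" if "l < n" for l
    using monomial_map_inverse[of x n l A B] monomial_map_inverse[of y n l A B] x y eq that AB
    by simp
  moreover have "x l = y l" if "n \<le> l" for l
    using x y that by (simp add: torus_def coord_box_def)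
  ultimately show "x = y" by (metis ext not_le)
qed

definition cube_vertex ::
    "nat \<Rightarrow> (nat \<Rightarrow> nat \<Rightarrow> int) \<Rightarrow> (nat \<Rightarrow> int) \<Rightarrow> nat set \<Rightarrow> nat \<Rightarrow> int" where
  "cube_vertex n A lam S = (\<lambda>j. if j < n then lam j + (\<Sum>m\<in>S. A j m) else 0)"

lemma inj_on_cube_vertex:
  assumes "unimodular n A"
  shows "inj_on (cube_vertex n A lam) (Pow {..<n})"
proof (rule inj_onI)
  obtain B where BA: "\<And>j l. j < n \<Longrightarrow> l < n \<Longrightarrow> (\<Sum>m<n. B j m * A m l) = (if j = l then 1 else 0)"
    using assms unfolding unimodular_def by blast
  have recover: "(\<Sum>j<n. B m j * (cube_vertex n A lam S j - lam j)) = (if m \<in> S then 1 else 0)"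
    if S: "S \<subseteq> {..<n}" and m: "m < n" for S m
  proof -
    have "(\<Sum>j<n. B m j * (cube_vertex n A lam S j - lam j)) = (\<Sum>l\<in>S. \<Sum>j<n. B m j * A j l)"
      by (simp add: cube_vertex_def sum_distrib_left sum.swap[of _ S])
    also have "\<dots> = (\<Sum>l\<in>S. if m = l then 1 else 0)"
      using S m by (intro sum.cong) (auto simp: BA)
    finally show ?thesis using finite_subset[OF S] by (simp add: sum.delta)
  qed
  fix S S' assume S: "S \<in> Pow {..<n}" and S': "S' \<in> Pow {..<n}"
    and eq: "cube_vertex n A lam S = cube_vertex n A lam S'"
  have "m \<in> S \<longleftrightarrow> m \<in> S'" if "m < n" for m
    using recover[of S m] recover[of S' m] S S' eq that by (auto split: if_splits)
  with S S' show "S = S'" by blast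
qed

lemma cube_embeds_vertices:
  assumes "cube_embeds n P k" "k \<le> n"
  obtains A lam where "unimodular n A"
    "\<And>S. S \<subseteq> {..<k} \<Longrightarrow> cube_vertex n A lam S \<in> lattice_pts P"
proof -
  obtain A lam where uni: "unimodular n A" and
    emb: "\<And>y::nat \<Rightarrow> real. (\<forall>j<k. 0 \<le> y j \<and> y j \<le> 1) \<and> (\<forall>j\<ge>k. y j = 0) \<Longrightarrow>
        (\<lambda>j. if j < n then (\<Sum>l<n. real_of_int (A j l) * y l) + real_of_int (lam j) else 0) \<in> P"
    using assms(1) unfolding cube_embeds_def by blast
  have "cube_vertex n A lam S \<in> lattice_pts P" if S: "S \<subseteq> {..<k}" for S
  proof -
    let ?y = "\<lambda>l. if l \<in> S then 1 else (0::real)"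
    have "{..<n} \<inter> S = S" using S assms(2) by auto
    then have "(\<Sum>l<n. real_of_int (A j l) * ?y l) = (\<Sum>l\<in>S. real_of_int (A j l))" for j
      by (simp add: if_distrib sum.inter_restrict[symmetric] Int_absorb1 cong: if_cong)
    moreover have "(\<forall>j<k. 0 \<le> ?y j \<and> ?y j \<le> 1) \<and> (\<forall>j\<ge>k. ?y j = 0)" using S by auto
    ultimately show ?thesis
      using emb[of ?y] by (auto simp: lattice_pts_def cube_vertex_def if_distrib add.commute cong: if_cong)
  qed
  with uni that show thesis by blast
qed

lemma lattice_pts_subset_coord_box:
  "in_box q n P \<Longrightarrow> lattice_pts P \<subseteq> coord_box n (\<lambda>_. {0..int q})"
proof
  fix p assume "in_box q n P" "p \<in> lattice_pts P"
  then have "(\<forall>j<n. 0 \<le> real_of_int (p j) \<and> real_of_int (p j) \<le> real q - 2) \<and>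
      (\<forall>j\<ge>n. real_of_int (p j) = 0)"
    by (auto simp: in_box_def lattice_pts_def)
  then show "p \<in> coord_box n (\<lambda>_. {0..int q})"
    by (auto simp: coord_box_def)
qed

lemma finite_lattice_pts: "in_box q n P \<Longrightarrow> finite (lattice_pts P)"
  by (rule finite_subset[OF lattice_pts_subset_coord_box finite_coord_box]) auto

text \<open>The coefficients of x^lam * prod_{m<k} (x^(a_m) - 1), a_m the m-th column of A;
  expanding the product, the monomials are exactly the images of the cube's vertices.\<close>
definition cube_coeff ::
    "nat \<Rightarrow> (nat \<Rightarrow> nat \<Rightarrow> int) \<Rightarrow> (nat \<Rightarrow> int) \<Rightarrow> nat \<Rightarrow> (nat \<Rightarrow> int) \<Rightarrow> 'a::field" where
  "cube_coeff n A lam k p =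
     (\<Sum>S\<in>Pow {..<k}. if p = cube_vertex n A lam S then (-1) ^ (k - card S) else 0)"

lemma cube_coeff_vertex_empty:
  assumes "unimodular n A" "k \<le> n"
  shows "cube_coeff n A lam k (cube_vertex n A lam {}) = (-1) ^ k"
proof -
  have "cube_vertex n A lam {} = cube_vertex n A lam S \<longleftrightarrow> S = {}" if "S \<subseteq> {..<k}" for S
    using inj_on_eq_iff[OF inj_on_cube_vertex[OF assms(1), of lam], of "{}" S] that assms(2)
    by (force simp: subset_eq)
  then have "cube_coeff n A lam k (cube_vertex n A lam {}) =
      (\<Sum>S\<in>Pow {..<k}. if S = {} then (-1) ^ (k - card S) else 0)"
    unfolding cube_coeff_def by (intro sum.cong) auto
  then show ?thesis by (simp add: sum.delta')
qed

lemma cube_coeff_outside: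
  assumes "\<And>S. S \<subseteq> {..<k} \<Longrightarrow> cube_vertex n A lam S \<in> lattice_pts P" "p \<notin> lattice_pts P"
  shows "cube_coeff n A lam k p = 0"
  using assms by (auto simp: cube_coeff_def intro!: sum.neutral)

lemma laurent_monomial_cube_vertex:
  assumes "x \<in> torus n"
  shows "laurent_monomial n (cube_vertex n A lam S) x =
    laurent_monomial n lam x * (\<Prod>m\<in>S. laurent_monomial n (\<lambda>j. A j m) x)"
proof -
  have "laurent_monomial n (cube_vertex n A lam S) x = laurent_monomial n (\<lambda>j. lam j + (\<Sum>m\<in>S. A j m)) x"
    by (simp add: laurent_monomial_def cube_vertex_def)
  also have "\<dots> = laurent_monomial n lam x * (\<Prod>m\<in>S. laurent_monomial n (\<lambda>j. A j m) x)"
    using assms by (simp add: laurent_monomial_add laurent_monomial_sum)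
  finally show ?thesis .
qed

lemma eval_toric_cube_coeff:
  assumes box: "in_box q n P" and kn: "k \<le> n"
    and vert: "\<And>S. S \<subseteq> {..<k} \<Longrightarrow> cube_vertex n A lam S \<in> lattice_pts P"
    and x: "x \<in> torus n"
  shows "eval_toric n P (cube_coeff n A lam k) x =
    laurent_monomial n lam x * (\<Prod>m<k. monomial_map n A x m - 1)"
proof -
  let ?v = "cube_vertex n A lam" and ?y = "\<lambda>m. laurent_monomial n (\<lambda>j. A j m) x"
  have mon: "(\<Prod>j<n. x j ^ nat (?v S j)) = laurent_monomial n lam x * (\<Prod>m\<in>S. ?y m)"
    if "S \<subseteq> {..<k}" for S
  proof -
    have "?v S \<in> coord_box n (\<lambda>_. {0..int q})"
      using lattice_pts_subset_coord_box[OF box] vert[OF that] by blast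
    then have "\<And>j. j < n \<Longrightarrow> 0 \<le> ?v S j" by (simp add: coord_box_def)
    then show ?thesis
      by (simp add: laurent_monomial_nat[symmetric] laurent_monomial_cube_vertex[OF x])
  qed
  have "eval_toric n P (cube_coeff n A lam k) x =
      (\<Sum>S\<in>Pow {..<k}. \<Sum>p\<in>lattice_pts P.
         if p = ?v S then (-1) ^ (k - card S) * (\<Prod>j<n. x j ^ nat (p j)) else 0)"
    unfolding eval_toric_def cube_coeff_def sum_distrib_right
    by (subst sum.swap) (auto intro!: sum.cong)
  also have "\<dots> = (\<Sum>S\<in>Pow {..<k}. (-1) ^ (k - card S) * (\<Prod>j<n. x j ^ nat (?v S j)))"
    using finite_lattice_pts[OF box] vert by (intro sum.cong) (auto simp: sum.delta')
  also have "\<dots> = laurent_monomial n lam x * (\<Sum>S\<in>Pow {..<k}. (\<Prod>m\<in>S. ?y m) * (\<Prod>m\<in>{..<k} - S. - 1))"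
    by (auto simp: mon sum_distrib_left card_Diff_subset finite_subset intro!: sum.cong)
  also have "\<dots> = laurent_monomial n lam x * (\<Prod>m<k. ?y m + - 1)"
    using prod_add[of "{..<k}" ?y "\<lambda>_. - 1"] by simp
  also have "(\<Prod>m<k. ?y m + - 1) = (\<Prod>m<k. monomial_map n A x m - 1)"
    using kn by (intro prod.cong) (auto simp: monomial_map_def)
  finally show ?thesis .
qed

lemma card_torus_minus_zero_set_le:
  fixes c :: "(nat \<Rightarrow> int) \<Rightarrow> 'a::{finite,field}"
  assumes uni: "unimodular n A" and kn: "k \<le> n"
    and eval: "\<And>x. x \<in> torus n \<Longrightarrow>
      eval_toric n P c x = laurent_monomial n lam x * (\<Prod>m<k. monomial_map n A x m - 1)"
  shows "card (torus n - zero_set n P c) \<le> (CARD('a) - 2) ^ k * (CARD('a) - 1) ^ (n - k)"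
proof -
  let ?Y = "coord_box n (\<lambda>m. if m < k then - {0, 1} else - {0::'a})"
  have into: "monomial_map n A ` (torus n - zero_set n P c) \<subseteq> ?Y"
  proof safe
    fix x assume x: "x \<in> torus n" "x \<notin> zero_set n P c"
    then have "(\<Prod>m<k. monomial_map n A x m - 1) \<noteq> 0"
      by (simp add: zero_set_eq eval)
    then have "monomial_map n A x m \<noteq> 1" if "m < k" for m
      using that by auto
    with monomial_map_in_torus[OF x(1)] show "monomial_map n A x \<in> ?Y"
      by (auto simp: torus_def coord_box_def)
  qed
  have "card (torus n - zero_set n P c) = card (monomial_map n A ` (torus n - zero_set n P c))"
    by (rule card_image[symmetric], rule inj_on_subset[OF inj_on_monomial_map[OF uni]]) auto
  also have "\<dots> \<le> card ?Y"
    using into by (intro card_mono finite_coord_box) auto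
  also have "\<dots> = (\<Prod>m<n. if m < k then CARD('a) - 2 else CARD('a) - 1)"
    unfolding card_coord_box by (intro prod.cong) (auto simp: card_Compl_0 card_Compl_0_1)
  also have "\<dots> = (CARD('a) - 2) ^ k * (CARD('a) - 1) ^ (n - k)"
  proof -
    have "{..<n} \<inter> {m. m < k} = {..<k}" "{..<n} \<inter> - {m. m < k} = {k..<n}"
      using kn by auto
    then show ?thesis by (simp add: prod.If_cases)
  qed
  finally show ?thesis .
qed

lemma card_zero_set_le_N_toric:
  fixes c :: "(nat \<Rightarrow> int) \<Rightarrow> 'a::{finite,field}"
  assumes "\<forall>p. p \<notin> lattice_pts P \<longrightarrow> c p = 0" "\<exists>p\<in>lattice_pts P. c p \<noteq> 0"
  shows "card (zero_set n P c) \<le> N_toric (T :: 'a itself) n P"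
proof -
  let ?S = "{card (zero_set n P c) | c :: (nat \<Rightarrow> int) \<Rightarrow> 'a.
      (\<forall>p. p \<notin> lattice_pts P \<longrightarrow> c p = 0) \<and> (\<exists>p\<in>lattice_pts P. c p \<noteq> 0)}"
  have "card (zero_set n P c') \<le> card (torus n :: (nat \<Rightarrow> 'a) set)" for c' :: "(nat \<Rightarrow> int) \<Rightarrow> 'a"
    by (intro card_mono finite_torus) (auto simp: zero_set_eq)
  then have "?S \<subseteq> {..card (torus n :: (nat \<Rightarrow> 'a) set)}" by auto
  then have "finite ?S" by (rule finite_subset) simp
  moreover have "card (zero_set n P c) \<in> ?S" using assms by blast
  ultimately show ?thesis unfolding N_toric_def by (rule Max_ge)
qed

lemma delta_toric_le_nonzeros:
  fixes c :: "(nat \<Rightarrow> int) \<Rightarrow> 'a::{finite,field}"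
  assumes "\<forall>p. p \<notin> lattice_pts P \<longrightarrow> c p = 0" "\<exists>p\<in>lattice_pts P. c p \<noteq> 0"
  shows "delta_toric (T :: 'a itself) n P \<le>
    real (card (torus n - zero_set n P c)) / real ((CARD('a) - 1) ^ n)"
  unfolding delta_toric_def
proof (rule divide_right_mono)
  have Z: "zero_set n P c \<subseteq> torus n" by (auto simp: zero_set_eq)
  have "card (torus n :: (nat \<Rightarrow> 'a) set) = card (zero_set n P c) + card (torus n - zero_set n P c)"
    using card_Diff_subset[OF finite_subset[OF Z finite_torus] Z] card_mono[OF finite_torus Z] by simp
  then show "real ((CARD('a) - 1) ^ n) - real (N_toric T n P) \<le> real (card (torus n - zero_set n P c))"
    using card_zero_set_le_N_toric[OF assms, of n T] by (simp add: card_torus)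
qed simp

lemma delta_toric_le_cube_embeds:
  assumes box: "in_box CARD('a) n P" and cube: "cube_embeds n P k" and kn: "k \<le> n"
  shows "delta_toric (T :: 'a::{finite,field} itself) n P \<le>
    (real (CARD('a) - 2) / real (CARD('a) - 1)) ^ k"
proof -
  obtain A lam where uni: "unimodular n A"
    and vert: "\<And>S. S \<subseteq> {..<k} \<Longrightarrow> cube_vertex n A lam S \<in> lattice_pts P"
    using cube_embeds_vertices[OF cube kn] by blast
  let ?c = "cube_coeff n A lam k :: (nat \<Rightarrow> int) \<Rightarrow> 'a"
  have support: "\<forall>p. p \<notin> lattice_pts P \<longrightarrow> ?c p = 0"
    using cube_coeff_outside[of k n A lam P] vert by blast
  have nonzero: "\<exists>p\<in>lattice_pts P. ?c p \<noteq> 0"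
    using cube_coeff_vertex_empty[OF uni kn, of lam, where 'a='a] vert[of "{}"]
    by (intro bexI[of _ "cube_vertex n A lam {}"]) simp_all
  have nonzeros: "card (torus n - zero_set n P ?c) \<le> (CARD('a) - 2) ^ k * (CARD('a) - 1) ^ (n - k)"
    by (rule card_torus_minus_zero_set_le[OF uni kn]) (rule eval_toric_cube_coeff[OF box kn vert])
  have "delta_toric T n P \<le> real (card (torus n - zero_set n P ?c)) / real ((CARD('a) - 1) ^ n)"
    by (rule delta_toric_le_nonzeros[OF support nonzero])
  also have "\<dots> \<le> real ((CARD('a) - 2) ^ k * (CARD('a) - 1) ^ (n - k)) / real ((CARD('a) - 1) ^ n)"
    using nonzeros by (intro divide_right_mono of_nat_mono) simp_all
  also have "\<dots> = (real (CARD('a) - 2) / real (CARD('a) - 1)) ^ k"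
  proof -
    have "(CARD('a) - 1) ^ n = (CARD('a) - 1) ^ k * (CARD('a) - 1) ^ (n - k)"
      using kn by (simp flip: power_add)
    moreover have "CARD('a) - 1 \<noteq> 0" using card_UNIV_ge_2[where 'a='a] by simp
    ultimately show ?thesis by (simp add: power_divide)
  qed
  finally show ?thesis .
qed

lemma cube_embeds_0:
  assumes "integral_polytope n P"
  shows "cube_embeds n P 0"
proof -
  obtain V v where fin: "finite V" and v: "v \<in> V"
    and Vint: "\<forall>v\<in>V. (\<forall>j. v j \<in> \<int>) \<and> (\<forall>j\<ge>n. v j = 0)" and PV: "P = conv_hull_fin V"
    using assms unfolding integral_polytope_def by blast
  define I :: "nat \<Rightarrow> nat \<Rightarrow> int" where "I j l = (if j = l then 1 else 0)" for j l
  define lam where "lam j = (if j < n then \<lfloor>v j\<rfloor> else 0)" for j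
  have "(\<Sum>m<n. I j m * I m l) = I j l" if "j < n" for j l
  proof -
    have "(\<Sum>m<n. I j m * I m l) = (\<Sum>m<n. if m = j then I j l else 0)"
      by (intro sum.cong) (auto simp: I_def)
    then show ?thesis using that by simp
  qed
  then have uni: "unimodular n I"
    unfolding unimodular_def by (intro exI[of _ I]) (simp add: I_def)
  have "(\<Sum>w\<in>V. (if w = v then 1 else 0) * w j) = v j" for j
  proof -
    have "(\<Sum>w\<in>V. (if w = v then 1 else 0) * w j) = (\<Sum>w\<in>V. if w = v then v j else 0)"
      by (intro sum.cong) auto
    then show ?thesis using fin v by simp
  qed
  then have "v \<in> P"
    unfolding PV conv_hull_fin_def
    using fin v by (intro CollectI exI[of _ "\<lambda>w. if w = v then 1 else 0"]) simp
  moreover have "(\<lambda>j. if j < n then (\<Sum>l<n. real_of_int (I j l) * y l) + real_of_int (lam j) else 0) = v"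
    if "\<forall>j\<ge>0. y j = 0" for y :: "nat \<Rightarrow> real"
    using that Vint v by (auto simp: fun_eq_iff lam_def)
  ultimately show ?thesis
    unfolding cube_embeds_def using uni by (intro exI[of _ I] exI[of _ lam]) (auto simp: lam_def)
qed

lemma M_toric_mem:
  assumes "integral_polytope n P"
  shows "M_toric n P \<in> {k. k \<le> n \<and> cube_embeds n P k}"
  unfolding M_toric_def using cube_embeds_0[OF assms] by (intro Max_in) (auto simp: finite_nat_set_iff_bounded_le)

lemma frequently_ge_if_not_bdd_above:
  fixes M :: "nat \<Rightarrow> 'b::linorder"
  assumes "\<not> bdd_above (range M)"
  shows "\<exists>\<^sub>F i in sequentially. K \<le> M i"
proof (rule ccontr)
  assume "\<not> (\<exists>\<^sub>F i in sequentially. K \<le> M i)"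
  then have "\<exists>N. \<forall>i\<ge>N. M i < K"
    by (simp add: not_frequently eventually_sequentially not_le)
  then obtain N where N: "\<And>i. N \<le> i \<Longrightarrow> M i < K" by blast
  have "M i \<le> max K (Max (M ` {..<N}))" for i
    by (cases "N \<le> i") (auto dest: N simp: le_max_iff_disj)
  then show False using assms by (auto simp: bdd_above_def)
qed

lemma LIMSEQ_nonpos_if_bounded_along_unbounded:
  fixes d g :: "nat \<Rightarrow> real" and M :: "nat \<Rightarrow> nat"
  assumes d: "d \<longlonglongrightarrow> \<delta>" and bound: "\<And>i. d i \<le> g (M i)" and g: "g \<longlonglongrightarrow> 0"
    and M: "\<not> bdd_above (range M)"
  shows "\<delta> \<le> 0"
proof (rule field_le_epsilon)
  fix \<epsilon> :: real assume "0 < \<epsilon>"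
  then obtain K where K: "\<And>m. K \<le> m \<Longrightarrow> g m < \<epsilon>"
    using order_tendstoD(2)[OF g] by (auto simp: eventually_sequentially)
  have "\<exists>\<^sub>F i in sequentially. d i < \<epsilon>"
    using frequently_ge_if_not_bdd_above[OF M, of K] by (rule frequently_elim1) (meson bound K le_less_trans)
  have "\<not> (\<forall>\<^sub>F i in sequentially. \<epsilon> < d i)"
  proof
    assume "\<forall>\<^sub>F i in sequentially. \<epsilon> < d i"
    then have "\<forall>\<^sub>F i in sequentially. \<not> d i < \<epsilon>" by (rule eventually_mono) simp
    with \<open>\<exists>\<^sub>F i in sequentially. d i < \<epsilon>\<close> show False by (simp add: frequently_def)
  qed
  then show "\<delta> \<le> 0 + \<epsilon>"
    using order_tendstoD(1)[OF d, of \<epsilon>] by force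
qed

theorem mainTheorem12:
  fixes T :: "'a::{finite,field} itself"
    and n :: "nat \<Rightarrow> nat"
    and P :: "nat \<Rightarrow> (nat \<Rightarrow> real) set"
    and \<delta> R :: real
  assumes poly: "\<And>i. integral_polytope (n i) (P i)"
    and box: "\<And>i. in_box CARD('a) (n i) (P i)"
    and n_inf: "filterlim n at_top sequentially"
    and delta_range: "\<delta> \<in> {0..1}" and R_range: "R \<in> {0..1}"
    and delta_lim: "(\<lambda>i. delta_toric T (n i) (P i)) \<longlonglongrightarrow> \<delta>"
    and rate_lim: "(\<lambda>i. rate_toric T (n i) (P i)) \<longlonglongrightarrow> R"
    and M_unbdd: "\<not> bdd_above (range (\<lambda>i. M_toric (n i) (P i)))"
  shows "(\<lambda>i. delta_toric T (n i) (P i)) \<longlonglongrightarrow> 0"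
proof -
  define r where "r = real (CARD('a) - 2) / real (CARD('a) - 1)"
  have r: "0 \<le> r" "r < 1"
    using card_UNIV_ge_2[where 'a='a] by (auto simp: r_def of_nat_diff)
  have bound: "delta_toric T (n i) (P i) \<le> r ^ M_toric (n i) (P i)" for i
    using M_toric_mem[OF poly] delta_toric_le_cube_embeds[OF box] by (simp add: r_def)
  have "(\<lambda>m. r ^ m) \<longlonglongrightarrow> 0"
    using r by (intro LIMSEQ_power_zero) simp
  from LIMSEQ_nonpos_if_bounded_along_unbounded[OF delta_lim bound this M_unbdd]
  have "\<delta> = 0" using delta_range by simp
  with delta_lim show ?thesis by simp
qed

end
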